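(* Let $B\ge 1$ be an integer, $\mathcal{E}>0$, $\epsilon>0$. Let $X=\{\mathbf{i}=(i_0,\dots,i_{B-1})\in\mathbb{R}^B: i_b\ge 1+\epsilon\ \forall b\}$, $Y=\{\mathbf{t}=(t_0,\dots,t_{B-1})\in\mathbb{R}^B: t_b\ge 0\ \forall b\}$, and $S=\{(\mathbf{i},\mathbf{t})\in X\times Y: \sum_{b=0}^{B-1} i_b^2t_b\le\mathcal{E}\}$. Then the optimization problem $$\text{minimize } f(\mathbf{i},\mathbf{t})=\sum_{b=0}^{B-1}4^b\exp\bigl(-2(i_b-1)t_b\bigr)\quad\text{subject to } (\mathbf{i},\mathbf{t})\in S$$ is a biconvex problem: $S$ is a biconvex set on $X\times Y$ and $f$ is a biconvex function on $S$.
   Context: Let $X\subseteq\mathbb{R}^n$, $Y\subseteq\mathbb{R}^m$ be nonempty convex sets. A set $S\subseteq X\times Y$ is biconvex on $X\times Y$ if for every fixed $\mathbf{x}\in X$ the set $S_{\mathbf{x}}=\{\mathbf{y}\in Y:(\mathbf{x},\mathbf{y})\in S\}$ is convex, and for every fixed $\mathbf{y}\in Y$ the set $S_{\mathbf{y}}=\{\mathbf{x}\in X:(\mathbf{x},\mathbf{y})\in S\}$ is convex. A function $f:S\to\mathbb{R}$ is biconvex on $S$ if for every fixed $\mathbf{x}\in X$, $f(\mathbf{x},\cdot)$ is convex on $S_{\mathbf{x}}$, and for every fixed $\mathbf{y}\in Y$, $f(\cdot,\mathbf{y})$ is convex on $S_{\mathbf{y}}$. A problem of minimizing $f$ over $S$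 is biconvex if $S$ is biconvex on $X\times Y$ and $f$ is biconvex on $S$. *)

theory Defs
  imports "HOL-Analysis.Analysis"
begin

text \<open>Vectors in R^B are represented as functions nat => real that vanish at indices >= B.
  Convexity is stated with pointwise convex combinations.\<close>

definition cvx_set :: "(nat \<Rightarrow> real) set \<Rightarrow> bool" where
  "cvx_set A \<longleftrightarrow> (\<forall>x\<in>A. \<forall>y\<in>A. \<forall>u::real. 0 \<le> u \<and> u \<le> 1 \<longrightarrow>
      (\<lambda>b. u * x b + (1 - u) * y b) \<in> A)"

definition cvx_fun :: "(nat \<Rightarrow> real) set \<Rightarrow> ((nat \<Rightarrow> real) \<Rightarrow> real) \<Rightarrow> bool" where
  "cvx_fun A g \<longleftrightarrow> (\<forall>x\<in>A. \<forall>y\<in>A. \<forall>u::real. 0 \<le> u \<and> u \<le> 1 \<longrightarrow>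
      g (\<lambda>b. u * x b + (1 - u) * y b) \<le> u * g x + (1 - u) * g y)"

definition biconvex_set ::
  "(nat \<Rightarrow> real) set \<Rightarrow> (nat \<Rightarrow> real) set \<Rightarrow> ((nat \<Rightarrow> real) \<times> (nat \<Rightarrow> real)) set \<Rightarrow> bool" where
  "biconvex_set X Y S \<longleftrightarrow> X \<noteq> {} \<and> Y \<noteq> {} \<and> cvx_set X \<and> cvx_set Y \<and> S \<subseteq> X \<times> Y \<and>
     (\<forall>x\<in>X. cvx_set {y\<in>Y. (x, y) \<in> S}) \<and> (\<forall>y\<in>Y. cvx_set {x\<in>X. (x, y) \<in> S})"

definition biconvex_fun ::
  "(nat \<Rightarrow> real) set \<Rightarrow> (nat \<Rightarrow> real) set \<Rightarrow> ((nat \<Rightarrow> real) \<times> (nat \<Rightarrow> real)) set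
     \<Rightarrow> ((nat \<Rightarrow> real) \<times> (nat \<Rightarrow> real) \<Rightarrow> real) \<Rightarrow> bool" where
  "biconvex_fun X Y S f \<longleftrightarrow>
     (\<forall>x\<in>X. cvx_fun {y\<in>Y. (x, y) \<in> S} (\<lambda>y. f (x, y))) \<and>
     (\<forall>y\<in>Y. cvx_fun {x\<in>X. (x, y) \<in> S} (\<lambda>x. f (x, y)))"

end

theory Submission
  imports Defs
begin

text \<open>In each block of variables separately, every function involved is a sum
  \<open>\<Sum>b. \<phi>\<^sub>b (x\<^sub>b)\<close> of convex functions of single coordinates: for fixed \<open>t \<ge> 0\<close> the constraint
  is \<open>\<Sum>b. t\<^sub>b i\<^sub>b\<^sup>2\<close>, for fixed \<open>i\<close> it is linear in \<open>t\<close>, and in either block each term of \<open>f\<close> is a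
  nonnegative multiple of the exponential of an affine function. Such sums are convex, and so are
  their sublevel sets; this gives the convexity of the sections of \<open>S\<close> and of the partial
  functions of \<open>f\<close>.\<close>

lemma cvx_set_box:
  assumes "\<And>b. convex (C b)"
  shows "cvx_set {x. \<forall>b. x b \<in> C b}"
  unfolding cvx_set_def using convexD[OF assms] by simp

lemma cvx_set_sublevel:
  assumes "cvx_set A" and "cvx_fun A g"
  shows "cvx_set {x\<in>A. g x \<le> c}"
  unfolding cvx_set_def
proof (intro ballI allI impI)
  fix x y and u :: real
  assume x: "x \<in> {x\<in>A. g x \<le> c}" and y: "y \<in> {x\<in>A. g x \<le> c}" and u: "0 \<le> u \<and> u \<le> 1"
  then have "g (\<lambda>b. u * x b + (1 - u) * y b) \<le> u * g x + (1 - u) * g y"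
    using assms(2) by (auto simp: cvx_fun_def)
  also have "\<dots> \<le> u * c + (1 - u) * c"
    using x y u by (intro add_mono mult_left_mono) auto
  finally show "(\<lambda>b. u * x b + (1 - u) * y b) \<in> {x\<in>A. g x \<le> c}"
    using assms(1) x y u by (auto simp: cvx_set_def algebra_simps)
qed

lemma cvx_fun_sum_coordinates:
  assumes "\<And>b. b < B \<Longrightarrow> convex_on UNIV (\<phi> b)"
  shows "cvx_fun A (\<lambda>x. \<Sum>b<B. \<phi> b (x b))"
  unfolding cvx_fun_def
proof (intro ballI allI impI)
  fix x y and u :: real
  assume u: "0 \<le> u \<and> u \<le> 1"
  have "(\<Sum>b<B. \<phi> b (u * x b + (1 - u) * y b)) \<le> (\<Sum>b<B. u * \<phi> b (x b) + (1 - u) * \<phi> b (y b))"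
    using assms u by (intro sum_mono) (auto simp: convex_on_def)
  also have "\<dots> = u * (\<Sum>b<B. \<phi> b (x b)) + (1 - u) * (\<Sum>b<B. \<phi> b (y b))"
    by (simp add: sum.distrib sum_distrib_left)
  finally show "(\<Sum>b<B. \<phi> b (u * x b + (1 - u) * y b))
      \<le> u * (\<Sum>b<B. \<phi> b (x b)) + (1 - u) * (\<Sum>b<B. \<phi> b (y b))" .
qed

lemma convex_on_exp_affine:
  fixes a c d :: real
  assumes "0 \<le> c"
  shows "convex_on UNIV (\<lambda>s. c * exp (a * s + d))"
proof -
  have "convex_on UNIV (\<lambda>s. exp (a * s + d))"
  proof (rule convex_onI)
    fix t x y :: real
    assume "0 < t" "t < 1"
    then have "exp ((1 - t) *\<^sub>R (a * x + d) + t *\<^sub>R (a * y + d))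
        \<le> (1 - t) * exp (a * x + d) + t * exp (a * y + d)"
      by (intro convex_onD[OF exp_convex]) auto
    then show "exp (a * ((1 - t) *\<^sub>R x + t *\<^sub>R y) + d) \<le> (1 - t) * exp (a * x + d) + t * exp (a * y + d)"
      by (simp add: algebra_simps)
  qed simp
  then show ?thesis using assms by (rule convex_on_cmul[rotated])
qed

lemma cvx_fun_sum_linear: "cvx_fun A (\<lambda>x. \<Sum>b<B. c b * x b)"
  by (rule cvx_fun_sum_coordinates) (simp add: convex_on_def algebra_simps)

lemma cvx_fun_sum_weighted_squares:
  assumes "\<And>b. b < B \<Longrightarrow> 0 \<le> w b"
  shows "cvx_fun A (\<lambda>x. \<Sum>b<B. (x b)\<^sup>2 * w b)"
proof (rule cvx_fun_sum_coordinates)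
  fix b assume "b < B"
  then show "convex_on UNIV (\<lambda>s. s\<^sup>2 * w b)"
    using assms convex_on_cmul[OF _ convex_power2] by (simp add: mult.commute)
qed

lemma cvx_fun_sum_exp_affine:
  assumes "\<And>b. b < B \<Longrightarrow> 0 \<le> w b"
  shows "cvx_fun A (\<lambda>x. \<Sum>b<B. w b * exp (a b * x b + d b))"
  using assms convex_on_exp_affine by (intro cvx_fun_sum_coordinates) blast

theorem theorem1:
  fixes B :: nat and E \<epsilon> :: real
    and X Y :: "(nat \<Rightarrow> real) set"
    and S :: "((nat \<Rightarrow> real) \<times> (nat \<Rightarrow> real)) set"
    and f :: "(nat \<Rightarrow> real) \<times> (nat \<Rightarrow> real) \<Rightarrow> real"
  assumes "B \<ge> 1" and "E > 0" and "\<epsilon> > 0"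
    and X: "X = {i. (\<forall>b<B. i b \<ge> 1 + \<epsilon>) \<and> (\<forall>b\<ge>B. i b = 0)}"
    and Y: "Y = {t. (\<forall>b<B. t b \<ge> 0) \<and> (\<forall>b\<ge>B. t b = 0)}"
    and S: "S = {(i, t). i \<in> X \<and> t \<in> Y \<and> (\<Sum>b<B. (i b)\<^sup>2 * t b) \<le> E}"
    and f: "f = (\<lambda>(i, t). \<Sum>b<B. 4 ^ b * exp (- 2 * (i b - 1) * t b))"
  shows "biconvex_set X Y S \<and> biconvex_fun X Y S f"
proof -
  have "X = {x. \<forall>b. x b \<in> (if b < B then {1 + \<epsilon>..} else {0})}"
    "Y = {t. \<forall>b. t b \<in> (if b < B then {0..} else {0})}"
    unfolding X Y by (auto simp: not_less)
  then have convex_XY: "cvx_set X" "cvx_set Y"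
    by (simp_all add: cvx_set_box)
  have "(\<lambda>b. if b < B then 1 + \<epsilon> else 0) \<in> X" "(\<lambda>b. 0) \<in> Y"
    unfolding X Y by auto
  then have nonempty_XY: "X \<noteq> {}" "Y \<noteq> {}"
    by blast+
  have "cvx_set {t\<in>Y. (i, t) \<in> S}" if "i \<in> X" for i
    using cvx_set_sublevel[OF convex_XY(2) cvx_fun_sum_linear] that by (simp add: S)
  moreover have "cvx_set {i\<in>X. (i, t) \<in> S}" if "t \<in> Y" for t
    using cvx_set_sublevel[OF convex_XY(1) cvx_fun_sum_weighted_squares] that by (simp add: S Y)
  moreover have "cvx_fun A (\<lambda>t. f (i, t))" for A i
    using cvx_fun_sum_exp_affine[of B "\<lambda>b. 4 ^ b" A "\<lambda>b. - 2 * (i b - 1)" "\<lambda>b. 0"]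
    by (simp add: f)
  moreover have "cvx_fun A (\<lambda>i. f (i, t))" for A t
    using cvx_fun_sum_exp_affine[of B "\<lambda>b. 4 ^ b" A "\<lambda>b. - 2 * t b" "\<lambda>b. 2 * t b"]
    by (simp add: f algebra_simps)
  ultimately show ?thesis
    using convex_XY nonempty_XY by (auto simp: biconvex_set_def biconvex_fun_def S)
qed

end
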